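(* Let $f\in C^1(\mathbb{R}^n,\mathbb{R}^n)$ and let $x_0$ be a nondegenerate $T$-periodic limit cycle of $\dot x=f(x)$, $T>0$. Assume that the adjoint system $\dot z=-(f'(x_0(t)))^*z$ has $n$ linearly independent eigenfunctions, namely $z_1,\dots,z_{n-1}$, which are not $T$-periodic, and a $T$-periodic eigenfunction $z_0$ normalized so that $\langle\dot x_0(0),z_0(0)\rangle=1$. Then for every $t\in\mathbb{R}$ the last column of the matrix $\big((z_1(t),\dots,z_{n-1}(t),z_0(t))^{-1}\big)^*$ equals $\dot x_0(t)$.
   Context: Nondegenerate: the characteristic multiplier $+1$ of the linearized system $\dot y=f'(x_0(t))y$ (eigenvalue $1$ of $Y(T)$, $Y$ the fundamental matrix with $Y(0)=I$) has algebraic multiplicity $1$. An eigenfunction of a linear $T$-periodic system is a nonzero solution $z$ with $z(t+T)=\rho z(t)$ for all $t\in\mathbb{R}$ and some $\rho\in\mathbb{R}$. $^*$ denotes transpose; $(z_1(t),\dots,z_{n-1}(t),z_0(t))$ is the $n\times n$ matrix with these columns. *)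

theory Defs
  imports "HOL-Analysis.Analysis" "HOL-Computational_Algebra.Polynomial"
begin

definition charpoly :: "real^'n^'n \<Rightarrow> real poly" where
  "charpoly A = det (\<chi> i j. (if i = j then monom 1 1 else 0) - [:A $ i $ j:])"

definition alg_mult :: "real^'n^'n \<Rightarrow> real \<Rightarrow> nat" where
  "alg_mult A lambda = order lambda (charpoly A)"

definition is_solution :: "(real^'n \<Rightarrow> real^'n) \<Rightarrow> (real \<Rightarrow> real^'n) \<Rightarrow> bool" where
  "is_solution f x \<longleftrightarrow> (\<forall>t. (x has_vector_derivative f (x t)) (at t))"

definition periodic_limit_cycle ::
  "(real^'n \<Rightarrow> real^'n) \<Rightarrow> (real \<Rightarrow> real^'n) \<Rightarrow> real \<Rightarrow> bool" where
  "periodic_limit_cycle f x0 T \<longleftrightarrow>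
     T > 0 \<and> is_solution f x0 \<and> (\<forall>t. x0 (t + T) = x0 t) \<and>
     (\<exists>s t. x0 s \<noteq> x0 t) \<and>
     (\<exists>e>0. \<forall>y S. S > 0 \<and> is_solution f y \<and> (\<forall>t. y (t + S) = y t) \<and>
              (\<forall>t. infdist (y t) (range x0) < e) \<longrightarrow> range y = range x0)"

definition fundamental_matrix :: "(real \<Rightarrow> real^'n^'n) \<Rightarrow> (real \<Rightarrow> real^'n^'n) \<Rightarrow> bool" where
  "fundamental_matrix A Y \<longleftrightarrow> Y 0 = mat 1 \<and>
     (\<forall>t. (Y has_vector_derivative (A t ** Y t)) (at t))"

definition nondegenerate ::
  "(real^'n \<Rightarrow> real^'n^'n) \<Rightarrow> (real \<Rightarrow> real^'n) \<Rightarrow> real \<Rightarrow> bool" where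
  "nondegenerate f' x0 T \<longleftrightarrow>
     (\<forall>Y. fundamental_matrix (\<lambda>t. f' (x0 t)) Y \<longrightarrow> alg_mult (Y T) 1 = 1)"

definition eigenfunction ::
  "(real \<Rightarrow> real^'n^'n) \<Rightarrow> real \<Rightarrow> (real \<Rightarrow> real^'n) \<Rightarrow> bool" where
  "eigenfunction B T z \<longleftrightarrow>
     (\<forall>t. (z has_vector_derivative (B t *v z t)) (at t)) \<and> (\<exists>t. z t \<noteq> 0) \<and>
     (\<exists>rho::real. \<forall>t. z (t + T) = rho *\<^sub>R z t)"

end

theory Submission imports Defs begin

text \<open>For solutions y of \<open>y' = A(t) y\<close> and z of the adjoint system \<open>z' = -A(t)\<^sup>T z\<close> the
  pairing \<open>\<langle>y(t), z(t)\<rangle>\<close> is constant. Applied to the velocity \<open>x\<^sub>0'\<close>, which solves the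
  variational equation, and to an eigenfunction \<open>z\<^sub>j\<close> with multiplier \<open>\<rho> \<noteq> 1\<close>, periodicity of
  \<open>x\<^sub>0'\<close> gives \<open>c = \<rho> c\<close>, so the pairing vanishes; for \<open>z\<^sub>0\<close> it equals 1 by normalisation.
  Thus \<open>Z(t)\<^sup>T x\<^sub>0'(t)\<close> is the last unit vector, where \<open>Z(t)\<close> has the \<open>z\<^sub>j(t)\<close> as columns.
  \<open>Z(t)\<close> is invertible because, by uniqueness for linear equations (a Gronwall estimate),
  a linear combination of solutions vanishing at one time vanishes identically.\<close>

lemma inner_has_vector_derivative:
  fixes f g :: "real \<Rightarrow> real^'n"
  assumes "(f has_vector_derivative f') (at x)" "(g has_vector_derivative g') (at x)"
  shows "((\<lambda>x. f x \<bullet> g x) has_vector_derivative (f x \<bullet> g' + f' \<bullet> g x)) (at x)"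
  using bounded_bilinear.has_vector_derivative[OF bounded_bilinear_inner assms] by simp

lemma inner_adjoint_solutions_constant:
  fixes y z :: "real \<Rightarrow> real^'n"
  assumes y: "\<And>t. (y has_vector_derivative A t *v y t) (at t)"
    and z: "\<And>t. (z has_vector_derivative (- transpose (A t)) *v z t) (at t)"
  shows "y t \<bullet> z t = y s \<bullet> z s"
proof -
  have "DERIV (\<lambda>t. y t \<bullet> z t) t :> 0" for t
  proof -
    have "(- transpose (A t)) *v z t = - (transpose (A t) *v z t)"
      by (simp add: vec_eq_iff matrix_vector_mult_def sum_negf)
    then have "y t \<bullet> ((- transpose (A t)) *v z t) + (A t *v y t) \<bullet> z t = 0"
      by (simp add: dot_lmul_matrix[symmetric] inner_commute)
    then show ?thesis
      using inner_has_vector_derivative[OF y z, of t]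
      by (simp add: has_real_derivative_iff_has_vector_derivative)
  qed
  then show ?thesis using DERIV_isconst_all by blast
qed

lemma continuous_matrix_bounded_on_compact:
  fixes B :: "real \<Rightarrow> real^'n^'m"
  assumes "continuous_on S B" "compact S"
  obtains K where "\<And>s x. s \<in> S \<Longrightarrow> norm (B s *v x) \<le> K * norm x"
proof -
  obtain b where b: "\<And>s. s \<in> S \<Longrightarrow> norm (B s) \<le> b"
    using compact_imp_bounded[OF compact_continuous_image[OF assms]]
    unfolding bounded_iff by blast
  have "\<bar>B s $ i $ j\<bar> \<le> b" if "s \<in> S" for s i j
    using component_le_norm_cart[of "B s $ i" j] Finite_Cartesian_Product.norm_nth_le[of "B s" i]
      b[OF that]
    by linarith
  then have onorm_bound: "onorm ((*v) (B s)) \<le> real CARD('m) * real CARD('n) * b"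
    if "s \<in> S" for s
    using that by (intro onorm_le_matrix_component) auto
  have "norm (B s *v x) \<le> (real CARD('m) * real CARD('n) * b) * norm x" if "s \<in> S" for s x
  proof -
    have "norm (B s *v x) \<le> onorm ((*v) (B s)) * norm x"
      by (rule onorm) (rule matrix_vector_mul_bounded_linear)
    also have "\<dots> \<le> (real CARD('m) * real CARD('n) * b) * norm x"
      using onorm_bound[OF that] by (rule mult_right_mono) simp
    finally show ?thesis .
  qed
  then show ?thesis using that by blast
qed

lemma nonneg_zero_by_deriv_le:
  fixes g g' :: "real \<Rightarrow> real"
  assumes "a \<le> b"
    and deriv: "\<And>s. a \<le> s \<Longrightarrow> s \<le> b \<Longrightarrow> DERIV g s :> g' s"
    and growth: "\<And>s. a \<le> s \<Longrightarrow> s \<le> b \<Longrightarrow> g' s \<le> K * g s"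
    and "0 \<le> g b" "g a = 0"
  shows "g b = 0"
proof -
  define h where "h s = g s * exp (- K * s)" for s
  have "h b \<le> h a"
  proof (rule DERIV_nonpos_imp_nonincreasing[OF \<open>a \<le> b\<close>])
    fix s assume s: "a \<le> s" "s \<le> b"
    have "DERIV h s :> g' s * exp (- K * s) + exp (- K * s) * (- K) * g s"
      unfolding h_def by (rule DERIV_mult[OF deriv[OF s] DERIV_fun_exp[OF DERIV_cmult_Id]])
    moreover have "g' s * exp (- K * s) + exp (- K * s) * (- K) * g s
        = exp (- K * s) * (g' s - K * g s)"
      by (simp add: algebra_simps)
    moreover have "exp (- K * s) * (g' s - K * g s) \<le> 0"
      using growth[OF s] by (simp add: mult_nonneg_nonpos)
    ultimately show "\<exists>y. DERIV h s :> y \<and> y \<le> 0" by auto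
  qed
  then show ?thesis using assms(4,5) by (simp add: h_def mult_le_0_iff)
qed

lemma nonneg_zero_by_abs_deriv_le:
  fixes g g' :: "real \<Rightarrow> real"
  assumes deriv: "\<And>s. DERIV g s :> g' s"
    and growth: "\<And>s. s \<in> {min a b..max a b} \<Longrightarrow> \<bar>g' s\<bar> \<le> K * g s"
    and "\<And>s. 0 \<le> g s" "g a = 0"
  shows "g b = 0"
proof (cases "a \<le> b")
  case True
  show ?thesis
    by (rule nonneg_zero_by_deriv_le[OF True deriv])
      (use growth True assms(3,4) in \<open>auto simp: abs_le_iff\<close>)
next
  case False
  have "DERIV (\<lambda>s. g (- s)) s :> - g' (- s)" for s
    using deriv DERIV_mirror by blast
  then have "g (- (- b)) = 0"
    by (intro nonneg_zero_by_deriv_le[of "- a" "- b" "\<lambda>s. g (- s)" "\<lambda>s. - g' (- s)" K])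
      (use growth False assms(3,4) in \<open>auto simp: abs_le_iff\<close>)
  then show ?thesis by simp
qed

lemma linear_ode_solution_zero:
  fixes u :: "real \<Rightarrow> real^'n" and B :: "real \<Rightarrow> real^'n^'n"
  assumes B: "continuous_on UNIV B"
    and u: "\<And>t. (u has_vector_derivative B t *v u t) (at t)"
    and "u t0 = 0"
  shows "u t = 0"
proof -
  define S where "S = {min t0 t..max t0 t}"
  obtain K where K: "\<And>s x. s \<in> S \<Longrightarrow> norm (B s *v x) \<le> K * norm x"
    using continuous_matrix_bounded_on_compact[OF continuous_on_subset[OF B]]
    unfolding S_def by blast
  have deriv: "DERIV (\<lambda>s. u s \<bullet> u s) s :> 2 * (u s \<bullet> (B s *v u s))" for s
    using inner_has_vector_derivative[OF u u, of s]
    by (simp add: has_real_derivative_iff_has_vector_derivative inner_commute)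
  have growth: "\<bar>2 * (u s \<bullet> (B s *v u s))\<bar> \<le> (2 * K) * (u s \<bullet> u s)" if "s \<in> S" for s
  proof -
    have "\<bar>u s \<bullet> (B s *v u s)\<bar> \<le> norm (u s) * norm (B s *v u s)"
      by (rule Cauchy_Schwarz_ineq2)
    also have "\<dots> \<le> norm (u s) * (K * norm (u s))"
      using K[OF that] by (rule mult_left_mono) simp
    also have "\<dots> = K * (u s \<bullet> u s)"
      by (simp add: dot_square_norm power2_eq_square)
    finally show ?thesis by simp
  qed
  have "u t \<bullet> u t = 0"
    using nonneg_zero_by_abs_deriv_le[OF deriv growth[unfolded S_def]] \<open>u t0 = 0\<close> by simp
  then show ?thesis by simp
qed

lemma solution_matrix_invertible:
  fixes z :: "'n \<Rightarrow> real \<Rightarrow> real^'n" and B :: "real \<Rightarrow> real^'n^'n"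
  assumes B: "continuous_on UNIV B"
    and z: "\<And>j s. (z j has_vector_derivative B s *v z j s) (at s)"
    and indep: "\<And>c. (\<forall>t. (\<Sum>j\<in>UNIV. c j *\<^sub>R z j t) = 0) \<Longrightarrow> (\<forall>j. c j = 0)"
  shows "invertible (\<chi> i j. z j t $ i)"
  unfolding invertible_left_inverse matrix_left_invertible_ker
proof (intro allI impI)
  fix c assume c: "(\<chi> i j. z j t $ i) *v c = 0"
  define u where "u s = (\<Sum>j\<in>UNIV. c $ j *\<^sub>R z j s)" for s
  have "(u has_vector_derivative B s *v u s) (at s)" for s
  proof -
    have "(u has_vector_derivative (\<Sum>j\<in>UNIV. c $ j *\<^sub>R (B s *v z j s))) (at s)"
      unfolding u_def
      by (intro has_vector_derivative_sum
          bounded_linear.has_vector_derivative[OF bounded_linear_scaleR_right] z)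
    then show ?thesis
      by (simp add: u_def linear_sum[OF matrix_vector_mul_linear] matrix_vector_mult_scaleR)
  qed
  moreover have "u t = 0"
    using c by (simp add: u_def vec_eq_iff matrix_vector_mult_def mult.commute)
  ultimately have "u s = 0" for s
    using linear_ode_solution_zero[OF B] by blast
  then show "c = 0"
    using indep[of "\<lambda>j. c $ j"] by (simp add: u_def vec_eq_iff)
qed

lemma column_transpose_matrix_inv_dual:
  fixes w :: "'n \<Rightarrow> real^'n"
  assumes "invertible (\<chi> i j. w j $ i)" "\<And>j. v \<bullet> w j = (if j = k then 1 else 0)"
  shows "column k (transpose (matrix_inv (\<chi> i j. w j $ i))) = v"
proof -
  define M where "M = (\<chi> i j. w j $ i)"
  have "M ** matrix_inv M = mat 1 \<and> matrix_inv M ** M = mat 1"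
    using assms(1) unfolding M_def invertible_def matrix_inv_def by (rule someI_ex)
  then have inv: "transpose (matrix_inv M) ** transpose M = mat 1"
    by (simp only: matrix_transpose_mul[symmetric] transpose_mat)
  have dual: "transpose M *v v = axis k 1"
    using assms(2) by (simp add: M_def vec_eq_iff transpose_def matrix_vector_mult_def axis_def
        inner_vec_def mult.commute)
  have "column k (transpose (matrix_inv M)) = transpose (matrix_inv M) *v axis k 1"
    by (simp add: matrix_vector_mult_basis)
  also have "\<dots> = (transpose (matrix_inv M) ** transpose M) *v v"
    by (simp only: dual[symmetric] matrix_vector_mul_assoc)
  also have "\<dots> = v"
    by (simp only: inv matrix_vector_mul_lid)
  finally show ?thesis unfolding M_def .
qed

lemma vector_derivative_solution:
  assumes "is_solution f x"
  shows "vector_derivative x (at t) = f (x t)"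
  using assms vector_derivative_at unfolding is_solution_def by blast

lemma velocity_solves_variational_equation:
  assumes f: "\<And>x. (f has_derivative (\<lambda>h. f' x *v h)) (at x)"
    and x: "is_solution f x"
  shows "((\<lambda>t. vector_derivative x (at t))
          has_vector_derivative f' (x t) *v vector_derivative x (at t)) (at t)"
proof -
  have x': "(x has_vector_derivative f (x t)) (at t)"
    using x unfolding is_solution_def by blast
  have v: "(\<lambda>t. vector_derivative x (at t)) = f \<circ> x"
    using vector_derivative_solution[OF x] by auto
  show ?thesis
    using diff_chain_at[OF x'[unfolded has_vector_derivative_def] f]
    unfolding has_vector_derivative_def v
    by (simp add: o_def matrix_vector_mult_scaleR vector_derivative_solution[OF x])
qed

lemma continuous_on_adjoint_linearization:
  fixes f :: "real^'n \<Rightarrow> real^'n" and f' :: "real^'n \<Rightarrow> real^'n^'n"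
  assumes "continuous_on UNIV f'" "is_solution f x"
  shows "continuous_on UNIV (\<lambda>s. - transpose (f' (x s)))"
proof -
  have "continuous_on UNIV x"
    using assms(2) unfolding is_solution_def
    by (meson continuous_at_imp_continuous_on has_vector_derivative_continuous)
  then have "continuous_on UNIV (\<lambda>s. f' (x s))"
    using continuous_on_compose2[OF assms(1)] by blast
  then show ?thesis
    unfolding transpose_def
    by (intro continuous_on_minus continuous_on_vec_lambda continuous_on_component)
qed

lemma inner_nonperiodic_eigenfunction_eq_0:
  fixes v z :: "real \<Rightarrow> real^'n"
  assumes const: "\<And>s. v s \<bullet> z s = v 0 \<bullet> z 0"
    and "v T = v 0"
    and "\<And>t. z (t + T) = rho *\<^sub>R z t"
    and "\<not> (\<forall>t. z (t + T) = z t)"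
  shows "v s \<bullet> z s = 0"
proof -
  have "rho \<noteq> 1" using assms(3,4) by auto
  have "v 0 \<bullet> z 0 = rho * (v 0 \<bullet> z 0)"
    using const[of T] assms(2) assms(3)[of 0] by simp
  then have "v 0 \<bullet> z 0 = 0" using \<open>rho \<noteq> 1\<close> by (metis mult_cancel_right2)
  then show ?thesis using const by simp
qed

text \<open>Of the properties of the cycle only the periodicity of \<open>x0\<close> enters.\<close>

theorem lemma3:
  fixes f :: "real^'n \<Rightarrow> real^'n"
    and f' :: "real^'n \<Rightarrow> real^'n^'n"
    and x0 :: "real \<Rightarrow> real^'n"
    and T :: real
    and z :: "'n \<Rightarrow> real \<Rightarrow> real^'n"
    and i0 :: 'n
  assumes f_deriv: "\<And>x. (f has_derivative (\<lambda>h. f' x *v h)) (at x)"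
    and f'_cont: "continuous_on UNIV f'"
    and cycle: "periodic_limit_cycle f x0 T"
    and nondeg: "nondegenerate f' x0 T"
    and eig: "\<And>i. eigenfunction (\<lambda>t. - transpose (f' (x0 t))) T (z i)"
    and indep: "\<And>c. (\<forall>t. (\<Sum>i\<in>UNIV. c i *\<^sub>R z i t) = 0) \<Longrightarrow> (\<forall>i. c i = 0)"
    and not_periodic: "\<And>i. i \<noteq> i0 \<Longrightarrow> \<not> (\<forall>t. z i (t + T) = z i t)"
    and periodic0: "\<And>t. z i0 (t + T) = z i0 t"
    and normalized: "vector_derivative x0 (at 0) \<bullet> z i0 0 = 1"
  shows "\<forall>t. column i0 (transpose (matrix_inv (\<chi> i j. z j t $ i)))
               = vector_derivative x0 (at t)"
proof
  fix t
  define v where "v s = vector_derivative x0 (at s)" for s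
  have sol: "is_solution f x0" and per: "\<And>s. x0 (s + T) = x0 s"
    using cycle unfolding periodic_limit_cycle_def by auto
  have v': "\<And>s. (v has_vector_derivative f' (x0 s) *v v s) (at s)"
    unfolding v_def by (rule velocity_solves_variational_equation[OF f_deriv sol])
  have z': "\<And>j s. (z j has_vector_derivative (- transpose (f' (x0 s))) *v z j s) (at s)"
    using eig unfolding eigenfunction_def by blast
  have "v T = v 0"
    using per[of 0] by (simp add: v_def vector_derivative_solution[OF sol])
  have const: "v s \<bullet> z j s = v 0 \<bullet> z j 0" for s j
    by (rule inner_adjoint_solutions_constant[OF v' z'])
  have "v t \<bullet> z j t = (if j = i0 then 1 else 0)" for j
  proof (cases "j = i0")
    case True
    then show ?thesis using const[of t i0] normalized by (simp add: v_def)
  next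
    case False
    obtain rho where "\<And>s. z j (s + T) = rho *\<^sub>R z j s"
      using eig[of j] unfolding eigenfunction_def by blast
    from inner_nonperiodic_eigenfunction_eq_0[OF const[of _ j] \<open>v T = v 0\<close> this
        not_periodic[OF False]]
    show ?thesis using False by simp
  qed
  moreover have "invertible (\<chi> i j. z j t $ i)"
    using solution_matrix_invertible[where z = z, OF _ z' indep]
      continuous_on_adjoint_linearization[OF f'_cont sol] by blast
  ultimately show "column i0 (transpose (matrix_inv (\<chi> i j. z j t $ i))) = v t"
    by (intro column_transpose_matrix_inv_dual)
qed

end
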